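(* Let $D,K,N\in\mathbb{N}$ and let $\{d_n\}_{n\in\mathbb{N}}$ be a sequence of natural numbers. Writing $D_n=\prod_{i=1}^{n}d_i$, we have $$D^{N+1}\prod_{i=1}^{N}(KD_i+d_i)\geq KDD_N\sum_{n=1}^{N}D^n\prod_{i=1}^{n-1}(KD_i+d_i).$$
   Context: $\mathbb{N}=\{1,2,3,\ldots\}$; empty products equal $1$. *)

theory Defs
  imports Main
begin

end

theory Submission
  imports Defs
begin

text \<open>With \<open>D_n = d_1 \<cdots> d_n\<close>, \<open>P_n = \<Prod>_{i \<le> n} (K D_i + d_i)\<close> and
  \<open>S_N = \<Sum>_{n \<le> N} D^n P_{n-1}\<close>, the strengthened inequality
  \<open>D^N P_N \<ge> K D_N S_N + D^N D_N\<close> is inductive in \<open>N\<close>: the step to \<open>N + 1\<close>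
  multiplies the old inequality by \<open>D d_{N+1}\<close>, and the new summand \<open>K D_{N+1} D^{N+1} P_N\<close>
  on the right is exactly the contribution of \<open>K D_{N+1}\<close> in the new factor
  \<open>K D_{N+1} + d_{N+1}\<close> of \<open>P_{N+1}\<close>. Dropping \<open>D^N D_N\<close> and multiplying by \<open>D\<close>
  gives the theorem; only \<open>D \<ge> 1\<close> is needed.\<close>

lemma prod_partial_prods_ge_sum:
  fixes D K N :: nat and d :: "nat \<Rightarrow> nat"
  assumes "D \<ge> 1"
  shows "K * (\<Prod>j=1..N. d j) *
           (\<Sum>n=1..N. D ^ n * (\<Prod>i=1..n-1. K * (\<Prod>j=1..i. d j) + d i))
         + D ^ N * (\<Prod>j=1..N. d j)
         \<le> D ^ N * (\<Prod>i=1..N. K * (\<Prod>j=1..i. d j) + d i)"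
proof (induction N)
  case 0
  show ?case by simp
next
  case (Suc N)
  define P where "P = (\<Prod>i=1..N. K * (\<Prod>j=1..i. d j) + d i)"
  define Dn where "Dn = (\<Prod>j=1..N. d j)"
  define S where "S = (\<Sum>n=1..N. D ^ n * (\<Prod>i=1..n-1. K * (\<Prod>j=1..i. d j) + d i))"
  define e where "e = d (Suc N)"
  have IH: "K * Dn * S + D ^ N * Dn \<le> D ^ N * P"
    using Suc.IH unfolding P_def Dn_def S_def .
  have "K * (Dn * e) * (S + D ^ Suc N * P) + D ^ Suc N * (Dn * e)
        = e * (K * Dn * S + D ^ Suc N * Dn) + K * Dn * e * D ^ Suc N * P"
    by (simp add: algebra_simps)
  also have "\<dots> \<le> e * (D * (K * Dn * S + D ^ N * Dn)) + K * Dn * e * D ^ Suc N * P"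
    using assms by (simp add: algebra_simps)
  also have "\<dots> \<le> e * (D * (D ^ N * P)) + K * Dn * e * D ^ Suc N * P"
    using IH by simp
  also have "\<dots> = D ^ Suc N * (P * (K * (Dn * e) + e))"
    by (simp add: algebra_simps)
  finally show ?case
    unfolding P_def Dn_def S_def e_def by (simp add: prod.cl_ivl_Suc sum.cl_ivl_Suc)
qed

theorem lemma2p5:
  fixes D K N :: nat and d :: "nat \<Rightarrow> nat"
  assumes "D \<ge> 1" and "K \<ge> 1" and "N \<ge> 1"
    and "\<And>n. n \<ge> 1 \<Longrightarrow> d n \<ge> 1"
  shows "D ^ (N + 1) * (\<Prod>i=1..N. K * (\<Prod>j=1..i. d j) + d i)
         \<ge> K * D * (\<Prod>j=1..N. d j) *
           (\<Sum>n=1..N. D ^ n * (\<Prod>i=1..n-1. K * (\<Prod>j=1..i. d j) + d i))"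
proof -
  have "K * (\<Prod>j=1..N. d j) *
          (\<Sum>n=1..N. D ^ n * (\<Prod>i=1..n-1. K * (\<Prod>j=1..i. d j) + d i))
        \<le> D ^ N * (\<Prod>i=1..N. K * (\<Prod>j=1..i. d j) + d i)"
    using prod_partial_prods_ge_sum[OF assms(1), where K = K and N = N and d = d] by linarith
  then show ?thesis
    using mult_le_mono2[where k = D] by (simp add: algebra_simps)
qed

end
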